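(* For every integer $n\ge 2$, the $n$-abomination $\mathbb{X}_n$ is $(n+1)$-colorable.
   Context: $\mathbb{N}=\{0,1,2,\dots\}$. Fix an integer $n\ge 2$ and put $N=2^{n+1}-1$. Let $T_n$ be the set of triples $\langle k_1,k_2,k_3\rangle$ of pairwise distinct natural numbers $\le N$, with a fixed enumeration $T_n=\{s_0,\dots,s_t\}$. Let $U_n$ be a set of pairwise distinct elements $a_m,b_m$ ($m\in\mathbb{N}$) and $c_{m,k},d_{m,k},e^a_{m,k},e^b_{m,k}$ ($m\in\mathbb{N}$, $0\le k\le N$). Define $x\prec y$ on $U_n$ iff one of: (1) $x=a_m$ and $y\in\{c_{m,k_1},c_{m,k_2}\}$, where $s_j=\langle k_1,k_2,k_3\rangle$ with $j\equiv m \bmod (t+1)$; (2) $x=b_m$ and $y\in\{c_{m,k_1},c_{m,k_3}\}$, with $s_j$ as in (1); (3) $m\ge1$, $x=c_{m,k}$, and either $y=e^a_{m-1,j}$ with $j\ne k$, or $y=e^b_{m-1,i}$ for any $i\le N$; (4) $x=d_{m,k}$ and $y=c_{m,j}$ with $j\neq k$; (5) $x=e^a_{m,k}$ and either $y=a_m$ or $y=d_{m,j}$ with $j\ne k$; (6) $x=e^b_{m,k}$ and either $y=b_m$ or $y=d_{m,j}$ with $j\ne k$. Let $\le$ be the reflexive transitive closure of $\prec$. The $n$-abomination $\mathbb{X}_n$ is the poset $U_n\cup\{\bot\}$ where $\bot$ is a new least element, with the topology in which $U$ is open iff $\bot\notin U$ or $U$ is cofinite; it is an Esakia space. An E-partition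 on an Esakia space $\mathbb{X}$ is an equivalence relation $R$ on $X$ such that (a) if $\langle x,y\rangle\in R$ and $x\le z$ then there is $w\ge y$ with $\langle z,w\rangle\in R$; (b) if $\langle x,y\rangle\notin R$ there is a clopen union of $R$-classes containing $x$ but not $y$. For $p\in\mathbb{N}$, $\mathbb{C}_p=\{0,1\}^p$ ordered componentwise. A weak $p$-coloring of $\mathbb{X}$ is an order-preserving map $f\colon X\to\{0,1\}^p$ with $f^{-1}(\vec c)$ clopen for all $\vec c$; it is a $p$-coloring if every E-partition on $\mathbb{X}$ other than the identity relates two elements of distinct color. $\mathbb{X}$ is $p$-colorable if it admits a $p$-coloring. *)

theory Defs
  imports Main
begin

text \<open>Elements of the n-abomination: Bot is the added least element;
  the remaining constructors are the elements of U_n.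
  C m k, D m k, EA m k, EB m k stand for c_{m,k}, d_{m,k}, e^a_{m,k}, e^b_{m,k}.\<close>

datatype elt = Bot | A nat | B nat | C nat nat | D nat nat | EA nat nat | EB nat nat

definition bigN :: "nat \<Rightarrow> nat" where
  "bigN n = 2 ^ (n + 1) - 1"

definition triples :: "nat \<Rightarrow> (nat \<times> nat \<times> nat) set" where
  "triples n = {(k1, k2, k3). k1 \<le> bigN n \<and> k2 \<le> bigN n \<and> k3 \<le> bigN n
      \<and> k1 \<noteq> k2 \<and> k1 \<noteq> k3 \<and> k2 \<noteq> k3}"

definition enumeration :: "nat \<Rightarrow> (nat \<Rightarrow> nat \<times> nat \<times> nat) \<Rightarrow> bool" where
  "enumeration n s \<longleftrightarrow> bij_betw s {..< card (triples n)} (triples n)"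

definition Uset :: "nat \<Rightarrow> elt set" where
  "Uset n = range A \<union> range B
     \<union> {C m k | m k. k \<le> bigN n} \<union> {D m k | m k. k \<le> bigN n}
     \<union> {EA m k | m k. k \<le> bigN n} \<union> {EB m k | m k. k \<le> bigN n}"

definition Xset :: "nat \<Rightarrow> elt set" where
  "Xset n = insert Bot (Uset n)"

definition prec :: "nat \<Rightarrow> (nat \<Rightarrow> nat \<times> nat \<times> nat) \<Rightarrow> elt \<Rightarrow> elt \<Rightarrow> bool" where
  "prec n s x y \<longleftrightarrow> x \<in> Uset n \<and> y \<in> Uset n \<and>
    ((\<exists>m k1 k2 k3. s (m mod card (triples n)) = (k1, k2, k3) \<and>
        x = A m \<and> (y = C m k1 \<or> y = C m k2))
   \<or> (\<exists>m k1 k2 k3. s (m mod card (triples n)) = (k1, k2, k3) \<and>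
        x = B m \<and> (y = C m k1 \<or> y = C m k3))
   \<or> (\<exists>m k. m \<ge> 1 \<and> x = C m k \<and>
        ((\<exists>j. j \<noteq> k \<and> y = EA (m - 1) j) \<or> (\<exists>i. i \<le> bigN n \<and> y = EB (m - 1) i)))
   \<or> (\<exists>m k j. x = D m k \<and> j \<noteq> k \<and> y = C m j)
   \<or> (\<exists>m k. x = EA m k \<and> (y = A m \<or> (\<exists>j. j \<noteq> k \<and> y = D m j)))
   \<or> (\<exists>m k. x = EB m k \<and> (y = B m \<or> (\<exists>j. j \<noteq> k \<and> y = D m j))))"

definition leq :: "nat \<Rightarrow> (nat \<Rightarrow> nat \<times> nat \<times> nat) \<Rightarrow> elt \<Rightarrow> elt \<Rightarrow> bool" where
  "leq n s x y \<longleftrightarrow> x \<in> Xset n \<and> y \<in> Xset n \<and>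
     (x = Bot \<or> (x, y) \<in> {(u, v). prec n s u v}\<^sup>*)"

definition openX :: "nat \<Rightarrow> elt set \<Rightarrow> bool" where
  "openX n U \<longleftrightarrow> U \<subseteq> Xset n \<and> (Bot \<notin> U \<or> finite (Xset n - U))"

definition clopenX :: "nat \<Rightarrow> elt set \<Rightarrow> bool" where
  "clopenX n U \<longleftrightarrow> openX n U \<and> openX n (Xset n - U)"

definition E_partition :: "nat \<Rightarrow> (nat \<Rightarrow> nat \<times> nat \<times> nat) \<Rightarrow> elt rel \<Rightarrow> bool" where
  "E_partition n s R \<longleftrightarrow> equiv (Xset n) R
    \<and> (\<forall>x y z. (x, y) \<in> R \<and> leq n s x z \<longrightarrow> (\<exists>w. leq n s y w \<and> (z, w) \<in> R))
    \<and> (\<forall>x \<in> Xset n. \<forall>y \<in> Xset n. (x, y) \<notin> R \<longrightarrow>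
         (\<exists>U. clopenX n U \<and> (\<forall>u \<in> U. \<forall>v. (u, v) \<in> R \<longrightarrow> v \<in> U) \<and> x \<in> U \<and> y \<notin> U))"

text \<open>C_p = {0,1}^p, represented as boolean lists of length p (False = 0, True = 1),
  ordered componentwise.\<close>
definition cube :: "nat \<Rightarrow> bool list set" where
  "cube p = {c. length c = p}"

definition cube_le :: "bool list \<Rightarrow> bool list \<Rightarrow> bool" where
  "cube_le c d \<longleftrightarrow> list_all2 (\<le>) c d"

definition weak_coloring :: "nat \<Rightarrow> (nat \<Rightarrow> nat \<times> nat \<times> nat) \<Rightarrow> nat \<Rightarrow> (elt \<Rightarrow> bool list) \<Rightarrow> bool" where
  "weak_coloring n s p f \<longleftrightarrow> (\<forall>x \<in> Xset n. f x \<in> cube p)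
    \<and> (\<forall>x y. leq n s x y \<longrightarrow> cube_le (f x) (f y))
    \<and> (\<forall>c \<in> cube p. clopenX n {x \<in> Xset n. f x = c})"

definition coloring :: "nat \<Rightarrow> (nat \<Rightarrow> nat \<times> nat \<times> nat) \<Rightarrow> nat \<Rightarrow> (elt \<Rightarrow> bool list) \<Rightarrow> bool" where
  "coloring n s p f \<longleftrightarrow> weak_coloring n s p f
    \<and> (\<forall>R. E_partition n s R \<and> R \<noteq> Id_on (Xset n) \<longrightarrow> (\<exists>x y. (x, y) \<in> R \<and> f x \<noteq> f y))"

definition colorable :: "nat \<Rightarrow> (nat \<Rightarrow> nat \<times> nat \<times> nat) \<Rightarrow> nat \<Rightarrow> bool" where
  "colorable n s p \<longleftrightarrow> (\<exists>f. coloring n s p f)"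

end

(*
  Colour c_{0,k} by the n+1 binary digits of k (recall k \<le> 2^(n+1) - 1) and every other
  point by 0...0.  The c_{0,k} are maximal, so this is monotone, and its fibres are finite
  sets avoiding \<bottom> or cofinite sets containing \<bottom>, so they are clopen.

  Grade U_n by depth: x \<prec> y lowers the depth by one and the c_{0,k} have depth 0.  Let R be
  an E-partition whose classes are monochromatic.  By induction on depth x + depth y, related
  x, y in U_n are equal: by the forth condition and the induction hypothesis every upper
  cover of x lies above y.  Every point of positive depth has two distinct upper covers, so
  this forces depth x \<le> depth y, by symmetry equality, and then x and y have the same upper
  covers, which determine a point of positive depth; at depth 0 the colours separate.  A
  point related to \<bottom> would in turn be related to points of arbitrarily large depth above it.
*)
theory Submission
  imports Defs
begin

section \<open>Graded relations in which points are determined by their covers\<close>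

locale graded =
  fixes cov :: "'a \<Rightarrow> 'a \<Rightarrow> bool" and rank :: "'a \<Rightarrow> nat"
  assumes rank_cov: "cov x y \<Longrightarrow> rank x = Suc (rank y)"
begin

lemma relpowp_rank: "(cov ^^ k) x y \<Longrightarrow> rank x = rank y + k"
  by (induction k arbitrary: y) (auto dest: rank_cov)

lemma rtranclp_rank_le: "cov\<^sup>*\<^sup>* x y \<Longrightarrow> rank y \<le> rank x"
  by (auto dest!: rtranclp_imp_relpowp relpowp_rank)

lemma rtranclp_rank_eq: "cov\<^sup>*\<^sup>* x y \<Longrightarrow> rank x = rank y \<Longrightarrow> x = y"
  by (metis rtranclp_imp_relpowp relpowp_rank add_cancel_left_right relpowp_0_E)

lemma rtranclp_rank_Suc: "cov\<^sup>*\<^sup>* x y \<Longrightarrow> rank x = Suc (rank y) \<Longrightarrow> cov x y"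
  by (metis rtranclp_imp_relpowp relpowp_rank Suc_eq_plus1 add_left_cancel relpowp_1)

end

locale cover_determined = graded +
  fixes S :: "'a set"
  assumes two_covers: "x \<in> S \<Longrightarrow> 0 < rank x \<Longrightarrow> \<exists>y z. y \<noteq> z \<and> cov x y \<and> cov x z"
    and covers_inj: "x \<in> S \<Longrightarrow> y \<in> S \<Longrightarrow> rank x = rank y \<Longrightarrow> 0 < rank x \<Longrightarrow> cov x = cov y \<Longrightarrow> x = y"
begin

lemma rank_le_if_covers_above:
  assumes "x \<in> S" "0 < rank x" "\<And>z. cov x z \<Longrightarrow> cov\<^sup>*\<^sup>* y z"
  shows "rank x \<le> rank y"
proof (rule ccontr)
  assume "\<not> rank x \<le> rank y"
  then have "y = z" if "cov x z" for z
    using rank_cov[OF that] rtranclp_rank_le[OF assms(3)[OF that]]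
      rtranclp_rank_eq[OF assms(3)[OF that]] by simp
  then show False using two_covers[OF assms(1,2)] by blast
qed

lemma eq_if_covers_above:
  assumes "x \<in> S" "y \<in> S" "0 < rank x"
    and "\<And>z. cov x z \<Longrightarrow> cov\<^sup>*\<^sup>* y z" "\<And>z. cov y z \<Longrightarrow> cov\<^sup>*\<^sup>* x z"
  shows "x = y"
proof -
  have "rank x \<le> rank y" using rank_le_if_covers_above assms(1,3,4) by blast
  moreover have "rank y \<le> rank x" using rank_le_if_covers_above assms(2,3,5) calculation by simp
  ultimately have rank_eq: "rank x = rank y" by simp
  have "cov x = cov y"
  proof (intro ext iffI)
    fix z
    show "cov y z" if "cov x z" using that assms(4) rtranclp_rank_Suc rank_cov rank_eq by metis
    show "cov x z" if "cov y z" using that assms(5) rtranclp_rank_Suc rank_cov rank_eq by metis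
  qed
  then show ?thesis using covers_inj assms(1-3) rank_eq by blast
qed

lemma zigzag_relation_eq:
  assumes "R \<subseteq> S \<times> S" "sym R"
    and zigzag: "\<And>x y z. (x, y) \<in> R \<Longrightarrow> cov x z \<Longrightarrow> \<exists>w. cov\<^sup>*\<^sup>* y w \<and> (z, w) \<in> R"
    and rank0: "\<And>x y. (x, y) \<in> R \<Longrightarrow> rank x = 0 \<Longrightarrow> rank y = 0 \<Longrightarrow> x = y"
  shows "(x, y) \<in> R \<Longrightarrow> x = y"
proof (induction "rank x + rank y" arbitrary: x y rule: less_induct)
  case less
  have covers_above: "cov\<^sup>*\<^sup>* v z"
    if uv: "(u, v) \<in> R" "rank u + rank v = rank x + rank y" "cov u z" for u v z
  proof -
    obtain w where w: "cov\<^sup>*\<^sup>* v w" "(z, w) \<in> R" using zigzag uv(1,3) by blast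
    have "rank z + rank w < rank x + rank y"
      using rank_cov[OF uv(3)] rtranclp_rank_le[OF w(1)] uv(2) by linarith
    then show ?thesis using less.hyps w by blast
  qed
  have yx: "(y, x) \<in> R" using less.prems \<open>sym R\<close> by (auto dest: symD)
  have "x \<in> S" "y \<in> S" using less.prems assms(1) by auto
  consider "0 < rank x" | "0 < rank y" | "rank x = 0" "rank y = 0" by linarith
  then show "x = y"
  proof cases
    case 1
    then show ?thesis
      using eq_if_covers_above[OF \<open>x \<in> S\<close> \<open>y \<in> S\<close>] covers_above[OF less.prems] covers_above[OF yx]
      by (simp add: add.commute)
  next
    case 2
    then show ?thesis
      using eq_if_covers_above[OF \<open>y \<in> S\<close> \<open>x \<in> S\<close>] covers_above[OF less.prems] covers_above[OF yx]
      by (simp add: add.commute)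
  next
    case 3
    then show ?thesis using rank0 less.prems by blast
  qed
qed

end

fun depth :: "elt \<Rightarrow> nat" where
  "depth Bot = 0"
| "depth (A m) = 3 * m + 1"
| "depth (B m) = 3 * m + 1"
| "depth (D m k) = 3 * m + 1"
| "depth (C m k) = 3 * m"
| "depth (EA m k) = 3 * m + 2"
| "depth (EB m k) = 3 * m + 2"

lemma mem_Uset_iff [simp]:
  "Bot \<notin> Uset n" "A m \<in> Uset n" "B m \<in> Uset n"
  "C m k \<in> Uset n \<longleftrightarrow> k \<le> bigN n" "D m k \<in> Uset n \<longleftrightarrow> k \<le> bigN n"
  "EA m k \<in> Uset n \<longleftrightarrow> k \<le> bigN n" "EB m k \<in> Uset n \<longleftrightarrow> k \<le> bigN n"
  by (auto simp: Uset_def)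

lemma mem_Xset_iff: "x \<in> Xset n \<longleftrightarrow> x = Bot \<or> x \<in> Uset n"
  by (auto simp: Xset_def)

lemma three_le_bigN: "1 \<le> n \<Longrightarrow> 3 \<le> bigN n"
  using power_increasing[of 2 "n + 1" "2::nat"] by (simp add: bigN_def)

lemma enumeration_triple:
  assumes "1 \<le> n" "enumeration n s"
  obtains k1 k2 k3 where "s (m mod card (triples n)) = (k1, k2, k3)"
    "k1 \<le> bigN n" "k2 \<le> bigN n" "k3 \<le> bigN n" "k1 \<noteq> k2" "k1 \<noteq> k3" "k2 \<noteq> k3"
proof -
  have "(0, 1, 2) \<in> triples n" using three_le_bigN[OF assms(1)] by (auto simp: triples_def)
  moreover have "finite (triples n)"
    by (rule finite_subset[of _ "{..bigN n} \<times> {..bigN n} \<times> {..bigN n}"]) (auto simp: triples_def)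
  ultimately have "m mod card (triples n) < card (triples n)"
    by (metis card_gt_0_iff empty_iff mod_less_divisor)
  then have "s (m mod card (triples n)) \<in> triples n"
    using assms(2) by (auto simp: enumeration_def bij_betw_def)
  then show ?thesis using that by (auto simp: triples_def)
qed

lemma exists_avoiding_three: "\<exists>j::nat. j \<le> 3 \<and> j \<noteq> a \<and> j \<noteq> b \<and> j \<noteq> c"
  by presburger

lemma prec_A_iff:
  "s (m mod card (triples n)) = (k1, k2, k3) \<Longrightarrow> k1 \<le> bigN n \<Longrightarrow> k2 \<le> bigN n \<Longrightarrow>
    prec n s (A m) y \<longleftrightarrow> y = C m k1 \<or> y = C m k2"
  by (auto simp: prec_def)

lemma prec_B_iff:
  "s (m mod card (triples n)) = (k1, k2, k3) \<Longrightarrow> k1 \<le> bigN n \<Longrightarrow> k3 \<le> bigN n \<Longrightarrow>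
    prec n s (B m) y \<longleftrightarrow> y = C m k1 \<or> y = C m k3"
  by (auto simp: prec_def)

lemma prec_C_iff:
  "prec n s (C m k) y \<longleftrightarrow> k \<le> bigN n \<and> 0 < m \<and>
     (\<exists>j \<le> bigN n. y = EA (m - 1) j \<and> j \<noteq> k \<or> y = EB (m - 1) j)"
  by (auto simp: prec_def)

lemma prec_D_iff:
  "prec n s (D m k) y \<longleftrightarrow> k \<le> bigN n \<and> (\<exists>j \<le> bigN n. j \<noteq> k \<and> y = C m j)"
  by (auto simp: prec_def)

lemma prec_EA_iff:
  "prec n s (EA m k) y \<longleftrightarrow> k \<le> bigN n \<and> (y = A m \<or> (\<exists>j \<le> bigN n. j \<noteq> k \<and> y = D m j))"
  by (auto simp: prec_def)

lemma prec_EB_iff: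
  "prec n s (EB m k) y \<longleftrightarrow> k \<le> bigN n \<and> (y = B m \<or> (\<exists>j \<le> bigN n. j \<noteq> k \<and> y = D m j))"
  by (auto simp: prec_def)

lemma graded_prec: "graded (prec n s) depth"
  by unfold_locales (auto simp: prec_def)

lemma abomination_two_covers:
  assumes "1 \<le> n" "enumeration n s" "x \<in> Uset n" "0 < depth x"
  shows "\<exists>y z. y \<noteq> z \<and> prec n s x y \<and> prec n s x z"
proof (cases x)
  case Bot
  with assms show ?thesis by simp
next
  case (A m)
  obtain k1 k2 k3 where "s (m mod card (triples n)) = (k1, k2, k3)"
    "k1 \<le> bigN n" "k2 \<le> bigN n" "k3 \<le> bigN n" "k1 \<noteq> k2" "k1 \<noteq> k3" "k2 \<noteq> k3"
    by (rule enumeration_triple[OF assms(1,2)])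
  then have "prec n s x (C m k1)" "prec n s x (C m k2)" "C m k1 \<noteq> C m k2"
    using A by (simp_all add: prec_A_iff)
  then show ?thesis by blast
next
  case (B m)
  obtain k1 k2 k3 where "s (m mod card (triples n)) = (k1, k2, k3)"
    "k1 \<le> bigN n" "k2 \<le> bigN n" "k3 \<le> bigN n" "k1 \<noteq> k2" "k1 \<noteq> k3" "k2 \<noteq> k3"
    by (rule enumeration_triple[OF assms(1,2)])
  then have "prec n s x (C m k1)" "prec n s x (C m k3)" "C m k1 \<noteq> C m k3"
    using B by (simp_all add: prec_B_iff)
  then show ?thesis by blast
next
  case (C m k)
  then have "prec n s x (EB (m - 1) 0)" "prec n s x (EB (m - 1) 1)" "EB (m - 1) 0 \<noteq> EB (m - 1) 1"
    using assms three_le_bigN[OF assms(1)] by (simp_all add: prec_C_iff)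
  then show ?thesis by blast
next
  case (D m k)
  obtain i :: nat where i: "i \<le> 3" "i \<noteq> k"
    using exists_avoiding_three[of k k k] by blast
  obtain j :: nat where j: "j \<le> 3" "j \<noteq> k" "j \<noteq> i"
    using exists_avoiding_three[of k i i] by blast
  have "prec n s x (C m i)" "prec n s x (C m j)" "C m i \<noteq> C m j"
    using D i j assms(3) three_le_bigN[OF assms(1)] by (simp_all add: prec_D_iff)
  then show ?thesis by blast
next
  case (EA m k)
  obtain j :: nat where "j \<le> 3" "j \<noteq> k"
    using exists_avoiding_three[of k k k] by blast
  then have "prec n s x (A m)" "prec n s x (D m j)" "A m \<noteq> D m j"
    using EA assms(3) three_le_bigN[OF assms(1)] by (simp_all add: prec_EA_iff)
  then show ?thesis by blast
next
  case (EB m k)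
  obtain j :: nat where "j \<le> 3" "j \<noteq> k"
    using exists_avoiding_three[of k k k] by blast
  then have "prec n s x (B m)" "prec n s x (D m j)" "B m \<noteq> D m j"
    using EB assms(3) three_le_bigN[OF assms(1)] by (simp_all add: prec_EB_iff)
  then show ?thesis by blast
qed

lemma prec_A_B_D_differ:
  assumes "1 \<le> n" "enumeration n s"
  shows "prec n s (A m) \<noteq> prec n s (B m)"
    and "k \<le> bigN n \<Longrightarrow> prec n s (A m) \<noteq> prec n s (D m k)"
    and "k \<le> bigN n \<Longrightarrow> prec n s (B m) \<noteq> prec n s (D m k)"
proof -
  obtain k1 k2 k3 where t: "s (m mod card (triples n)) = (k1, k2, k3)"
    "k1 \<le> bigN n" "k2 \<le> bigN n" "k3 \<le> bigN n" "k1 \<noteq> k2" "k1 \<noteq> k3" "k2 \<noteq> k3"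
    by (rule enumeration_triple[OF assms])
  have small: "j \<le> bigN n" if "j \<le> 3" for j
    using that three_le_bigN[OF assms(1)] by simp
  show "prec n s (A m) \<noteq> prec n s (B m)"
  proof
    assume "prec n s (A m) = prec n s (B m)"
    from fun_cong[OF this, of "C m k2"] show False using t by (simp add: prec_A_iff prec_B_iff)
  qed
  show "prec n s (A m) \<noteq> prec n s (D m k)" if "k \<le> bigN n"
  proof
    obtain j :: nat where j: "j \<le> 3" "j \<noteq> k" "j \<noteq> k1" "j \<noteq> k2"
      using exists_avoiding_three by blast
    assume "prec n s (A m) = prec n s (D m k)"
    from fun_cong[OF this, of "C m j"] show False
      using t j small[OF j(1)] that by (simp add: prec_A_iff prec_D_iff)
  qed
  show "prec n s (B m) \<noteq> prec n s (D m k)" if "k \<le> bigN n"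
  proof
    obtain j :: nat where j: "j \<le> 3" "j \<noteq> k" "j \<noteq> k1" "j \<noteq> k3"
      using exists_avoiding_three by blast
    assume "prec n s (B m) = prec n s (D m k)"
    from fun_cong[OF this, of "C m j"] show False
      using t j small[OF j(1)] that by (simp add: prec_B_iff prec_D_iff)
  qed
qed

lemma prec_indexed_differ:
  assumes "k \<le> bigN n" "k' \<le> bigN n" "k \<noteq> k'"
  shows "0 < m \<Longrightarrow> prec n s (C m k) \<noteq> prec n s (C m k')"
    and "prec n s (D m k) \<noteq> prec n s (D m k')"
    and "prec n s (EA m k) \<noteq> prec n s (EA m k')"
    and "prec n s (EB m k) \<noteq> prec n s (EB m k')"
proof -
  show "prec n s (C m k) \<noteq> prec n s (C m k')" if "0 < m"
  proof
    assume "prec n s (C m k) = prec n s (C m k')"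
    from fun_cong[OF this, of "EA (m - 1) k'"] show False using assms that by (simp add: prec_C_iff)
  qed
  show "prec n s (D m k) \<noteq> prec n s (D m k')"
  proof
    assume "prec n s (D m k) = prec n s (D m k')"
    from fun_cong[OF this, of "C m k'"] show False using assms by (simp add: prec_D_iff)
  qed
  show "prec n s (EA m k) \<noteq> prec n s (EA m k')"
  proof
    assume "prec n s (EA m k) = prec n s (EA m k')"
    from fun_cong[OF this, of "D m k'"] show False using assms by (simp add: prec_EA_iff)
  qed
  show "prec n s (EB m k) \<noteq> prec n s (EB m k')"
  proof
    assume "prec n s (EB m k) = prec n s (EB m k')"
    from fun_cong[OF this, of "D m k'"] show False using assms by (simp add: prec_EB_iff)
  qed
qed

lemma prec_EA_EB_differ:
  assumes "k \<le> bigN n"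
  shows "prec n s (EA m k) \<noteq> prec n s (EB m k')"
proof
  assume "prec n s (EA m k) = prec n s (EB m k')"
  from fun_cong[OF this, of "A m"] show False
    using assms by (simp add: prec_EA_iff prec_EB_iff)
qed

lemma three_mul_Suc_neq:
  "3 * a \<noteq> Suc (3 * b)" "3 * a \<noteq> Suc (Suc (3 * b))" "Suc (3 * a) \<noteq> Suc (Suc (3 * b))"
  "Suc (3 * b) \<noteq> 3 * a" "Suc (Suc (3 * b)) \<noteq> 3 * a" "Suc (Suc (3 * b)) \<noteq> Suc (3 * a)"
  by presburger+

lemma abomination_covers_inj:
  assumes "1 \<le> n" "enumeration n s" "x \<in> Uset n" "y \<in> Uset n"
    "depth x = depth y" "0 < depth x" "prec n s x = prec n s y"
  shows "x = y"
proof (rule ccontr)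
  assume "x \<noteq> y"
  then have "prec n s x \<noteq> prec n s y"
    using assms(1-6)
    by (cases x; cases y)
      (simp_all add: three_mul_Suc_neq prec_indexed_differ
        prec_A_B_D_differ[OF assms(1,2)] prec_A_B_D_differ[OF assms(1,2), THEN not_sym]
        prec_EA_EB_differ prec_EA_EB_differ[THEN not_sym])
  with assms(7) show False by simp
qed

lemma cover_determined_abomination:
  "1 \<le> n \<Longrightarrow> enumeration n s \<Longrightarrow> cover_determined (prec n s) depth (Uset n)"
  by (intro cover_determined.intro cover_determined_axioms.intro graded_prec
      abomination_two_covers abomination_covers_inj)

lemma rtranclp_prec_Uset: "(prec n s)\<^sup>*\<^sup>* x y \<Longrightarrow> x \<in> Uset n \<Longrightarrow> y \<in> Uset n"
  by (induction rule: rtranclp_induct) (auto simp: prec_def)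

lemma leq_Uset_iff: "x \<in> Uset n \<Longrightarrow> leq n s x y \<longleftrightarrow> (prec n s)\<^sup>*\<^sup>* x y"
  using rtranclp_prec_Uset by (auto simp: leq_def mem_Xset_iff rtranclp_rtrancl_eq)

lemma leq_Bot_iff: "leq n s Bot y \<longleftrightarrow> y \<in> Xset n"
  by (simp add: leq_def mem_Xset_iff)

lemma depth_eq_0_Uset: "x \<in> Uset n \<Longrightarrow> depth x = 0 \<Longrightarrow> \<exists>k \<le> bigN n. x = C 0 k"
  by (cases x) auto

lemma map_bit_upt_inj:
  fixes k k' :: nat
  assumes "k < 2 ^ m" "k' < 2 ^ m" "map (bit k) [0..<m] = map (bit k') [0..<m]"
  shows "k = k'"
proof (rule bit_eqI)
  fix i
  have "bit k i \<longleftrightarrow> i < m \<and> bit k i" "bit k' i \<longleftrightarrow> i < m \<and> bit k' i"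
    using assms(1,2) bit_take_bit_iff[of m] take_bit_nat_eq_self_iff by metis+
  moreover have "bit k i \<longleftrightarrow> bit k' i" if "i < m"
    using that arg_cong[OF assms(3), of "\<lambda>xs. xs ! i"] by simp
  ultimately show "bit k i \<longleftrightarrow> bit k' i" by blast
qed

definition abomination_coloring :: "nat \<Rightarrow> elt \<Rightarrow> bool list" where
  "abomination_coloring n x =
    (case x of C 0 k \<Rightarrow> map (bit k) [0..<n + 1] | _ \<Rightarrow> replicate (n + 1) False)"

lemma abomination_coloring_C0: "abomination_coloring n (C 0 k) = map (bit k) [0..<n + 1]"
  by (simp add: abomination_coloring_def)

lemma abomination_coloring_other:
  "(\<nexists>k. x = C 0 k) \<Longrightarrow> abomination_coloring n x = replicate (n + 1) False"
  by (cases x) (auto simp: abomination_coloring_def split: nat.split)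

lemma length_abomination_coloring: "length (abomination_coloring n x) = n + 1"
  by (cases x) (auto simp: abomination_coloring_def split: nat.split)

lemma abomination_coloring_C0_inj:
  assumes "k \<le> bigN n" "k' \<le> bigN n"
    and "abomination_coloring n (C 0 k) = abomination_coloring n (C 0 k')"
  shows "k = k'"
proof (rule map_bit_upt_inj)
  have "0 < (2::nat) ^ (n + 1)" by simp
  then show "k < 2 ^ (n + 1)" "k' < 2 ^ (n + 1)"
    using assms(1,2) unfolding bigN_def by linarith+
  show "map (bit k) [0..<n + 1] = map (bit k') [0..<n + 1]"
    using assms(3) by (simp add: abomination_coloring_C0)
qed

lemma clopenX_abomination_coloring_fibre: "clopenX n {x \<in> Xset n. abomination_coloring n x = c}"
proof -
  let ?zero = "replicate (n + 1) False" and ?F = "{x \<in> Xset n. abomination_coloring n x = c}"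
  have nonzero: "x \<in> C 0 ` {..bigN n}"
    if x: "x \<in> Xset n" "abomination_coloring n x \<noteq> ?zero" for x
  proof -
    obtain k where "x = C 0 k" using x(2) abomination_coloring_other by blast
    with x(1) show ?thesis by (simp add: mem_Xset_iff)
  qed
  have Bot: "Bot \<in> Xset n" "abomination_coloring n Bot = ?zero"
    by (simp_all add: mem_Xset_iff abomination_coloring_def)
  show ?thesis
  proof (cases "c = ?zero")
    case True
    then have "Xset n - ?F \<subseteq> C 0 ` {..bigN n}" using nonzero by blast
    then have "finite (Xset n - ?F)" by (rule finite_subset) simp
    moreover have "Bot \<notin> Xset n - ?F" using Bot True by simp
    ultimately show ?thesis by (simp add: clopenX_def openX_def)
  next
    case False
    then have "?F \<subseteq> C 0 ` {..bigN n}" using nonzero by blast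
    then have "finite ?F" by (rule finite_subset) simp
    moreover have "Bot \<notin> ?F" using Bot False by simp
    moreover have "Xset n - (Xset n - ?F) = ?F" by blast
    ultimately show ?thesis by (simp add: clopenX_def openX_def)
  qed
qed

lemma weak_coloring_abomination: "weak_coloring n s (n + 1) (abomination_coloring n)"
  unfolding weak_coloring_def
proof (intro conjI ballI allI impI)
  fix x y
  assume "leq n s x y"
  show "cube_le (abomination_coloring n x) (abomination_coloring n y)"
  proof (cases "\<exists>k. x = C 0 k")
    case True
    then obtain k where "x = C 0 k" by blast
    with \<open>leq n s x y\<close> have "x \<in> Uset n" by (simp add: leq_def mem_Xset_iff)
    with \<open>leq n s x y\<close> have "(prec n s)\<^sup>*\<^sup>* x y" by (simp add: leq_Uset_iff)
    then have "y = x"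
      using graded.rtranclp_rank_le[OF graded_prec] graded.rtranclp_rank_eq[OF graded_prec] \<open>x = C 0 k\<close>
      by fastforce
    then show ?thesis by (simp add: cube_le_def list.rel_refl)
  next
    case False
    then show ?thesis
      by (simp add: abomination_coloring_other cube_le_def list_all2_conv_all_nth
          length_abomination_coloring del: replicate_Suc)
  qed
qed (simp_all add: cube_def length_abomination_coloring clopenX_abomination_coloring_fibre)

section \<open>Monochromatic E-partitions are trivial\<close>

lemma E_partition_Uset_eq:
  assumes "1 \<le> n" "enumeration n s" "E_partition n s R"
    and monochromatic: "\<And>x y. (x, y) \<in> R \<Longrightarrow> abomination_coloring n x = abomination_coloring n y"
    and "(x, y) \<in> R" "x \<in> Uset n" "y \<in> Uset n"
  shows "x = y"
proof -
  let ?R = "R \<inter> Uset n \<times> Uset n"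
  have "sym R" and forth: "\<And>x y z. (x, y) \<in> R \<Longrightarrow> leq n s x z \<Longrightarrow> \<exists>w. leq n s y w \<and> (z, w) \<in> R"
    using assms(3) by (auto simp: E_partition_def equiv_def)
  then have "sym ?R" by (auto simp: sym_def)
  moreover have "\<exists>w. (prec n s)\<^sup>*\<^sup>* y w \<and> (z, w) \<in> ?R"
    if xyz: "(x, y) \<in> ?R" "prec n s x z" for x y z
  proof -
    have "x \<in> Uset n" "y \<in> Uset n" "z \<in> Uset n" using xyz by (auto simp: prec_def)
    then obtain w where "(prec n s)\<^sup>*\<^sup>* y w" "(z, w) \<in> R"
      using forth[of x y z] xyz by (auto simp: leq_Uset_iff)
    then show ?thesis using rtranclp_prec_Uset \<open>y \<in> Uset n\<close> \<open>z \<in> Uset n\<close> by blast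
  qed
  moreover have "x = y" if "(x, y) \<in> ?R" "depth x = 0" "depth y = 0" for x y
    using that depth_eq_0_Uset[of x n] depth_eq_0_Uset[of y n] monochromatic abomination_coloring_C0_inj
    by fastforce
  ultimately show ?thesis
    using cover_determined.zigzag_relation_eq[OF cover_determined_abomination[OF assms(1,2)]] assms(5-7)
    by blast
qed

lemma E_partition_Bot_class:
  assumes "E_partition n s R" "(Bot, y) \<in> R"
    and trivial_on_Uset: "\<And>x y. (x, y) \<in> R \<Longrightarrow> x \<in> Uset n \<Longrightarrow> y \<in> Uset n \<Longrightarrow> x = y"
  shows "y = Bot"
proof (rule ccontr)
  assume "y \<noteq> Bot"
  have "R \<subseteq> Xset n \<times> Xset n" and forth: "\<And>x y z. (x, y) \<in> R \<Longrightarrow> leq n s x z \<Longrightarrow> \<exists>w. leq n s y w \<and> (z, w) \<in> R"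
    using assms(1) by (auto simp: E_partition_def equiv_def refl_on_def)
  with assms(2) \<open>y \<noteq> Bot\<close> have "y \<in> Uset n" by (auto simp: mem_Xset_iff)
  define z where "z = C (Suc (depth y)) 0"
  have "z \<in> Uset n" by (simp add: z_def)
  then obtain w where "leq n s y w" "(z, w) \<in> R"
    using forth[OF assms(2)] by (auto simp: leq_Bot_iff mem_Xset_iff)
  then have "(prec n s)\<^sup>*\<^sup>* y w" "w \<in> Uset n"
    using \<open>y \<in> Uset n\<close> rtranclp_prec_Uset by (auto simp: leq_Uset_iff)
  then have "depth z \<le> depth y"
    using graded.rtranclp_rank_le[OF graded_prec] trivial_on_Uset \<open>(z, w) \<in> R\<close> \<open>z \<in> Uset n\<close>
    by blast
  then show False by (simp add: z_def)
qed

lemma E_partition_monochromatic_eq_Id_on: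
  assumes "1 \<le> n" "enumeration n s" "E_partition n s R"
    and "\<And>x y. (x, y) \<in> R \<Longrightarrow> abomination_coloring n x = abomination_coloring n y"
  shows "R = Id_on (Xset n)"
proof -
  have eqv: "equiv (Xset n) R" using assms(3) by (simp add: E_partition_def)
  then have R_X: "R \<subseteq> Xset n \<times> Xset n" by (simp add: equiv_def refl_on_def)
  have on_Uset: "x = y" if "(x, y) \<in> R" "x \<in> Uset n" "y \<in> Uset n" for x y
    by (rule E_partition_Uset_eq[OF assms that])
  have "x = y" if xy: "(x, y) \<in> R" for x y
  proof (cases "x = Bot \<or> y = Bot")
    case True
    have "(y, x) \<in> R" using eqv xy by (auto simp: equiv_def dest: symD)
    with True xy show ?thesis using E_partition_Bot_class[OF assms(3) _ on_Uset] by blast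
  next
    case False
    with xy R_X show ?thesis using on_Uset by (auto simp: mem_Xset_iff)
  qed
  then show ?thesis using eqv by (auto simp: equiv_def refl_on_def Id_on_def)
qed

theorem mainTheorem6:
  fixes n :: nat and s :: "nat \<Rightarrow> nat \<times> nat \<times> nat"
  assumes "n \<ge> 2" and "enumeration n s"
  shows "colorable n s (n + 1)"
proof -
  have "1 \<le> n" using assms(1) by simp
  then have "coloring n s (n + 1) (abomination_coloring n)"
    unfolding coloring_def
    using weak_coloring_abomination E_partition_monochromatic_eq_Id_on[OF _ assms(2)] by blast
  then show ?thesis by (auto simp: colorable_def)
qed

end
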